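(* Let $\rho_1,\rho_2,k_1,k_2,L>0$, $0<\alpha<1$ and $\eta\ge 0$, and let $\mathcal{A}$ be the operator on $\mathcal{H}$ described in the context. For every $\lambda\in\mathbb{R}$, $i\lambda$ is not an eigenvalue of $\mathcal{A}$.
   Context: Set $\mu(\xi)=|\xi|^{(2\alpha-1)/2}$ for $\xi\in\mathbb{R}$ and $\mathfrak{C}=\pi^{-1}\sin(\alpha\pi)$. All function spaces are complex. Let $\mathbb{H}^1_0=\{(u,v)\in H^1(-L,0)\times H^1(0,L):\ u(-L)=v(L)=0,\ u(0)=v(0)\}$, $\mathbb{L}^2=L^2(-L,0)\times L^2(0,L)$, and $\mathcal{H}=\mathbb{H}^1_0\times\mathbb{L}^2\times L^2(\mathbb{R};\mathbb{L}^2)$, whose elements are written $\mathbb{U}=(u,v,U,V,\varphi_1,\varphi_2)$ with $(u,v)\in\mathbb{H}^1_0$, $(U,V)\in\mathbb{L}^2$, $\varphi_1\in L^2(\mathbb{R};L^2(-L,0))$, $\varphi_2\in L^2(\mathbb{R};L^2(0,L))$ (functions of $(x,\xi)$). $\mathcal{H}$ is a Hilbert space with inner product $\langle\mathbb{U},\tilde{\mathbb{U}}\rangle_{\mathcal H}=\rho_1\int_{-L}^0U\overline{\tilde U}dx+\rho_2\int_0^LV\overline{\tilde V}dx+k_1\int_{-L}^0u_x\overline{\tilde u_x}dx+k_2\int_0^Lv_x\overline{\tilde v_x}dx+\mathfrak{C}\int_{\mathbb R}\int_{-L}^0\varphi_1\overline{\tilde\varphi_1}\,dx\,d\xi+\mathfrak{C}\int_{\mathbb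 R}\int_0^L\varphi_2\overline{\tilde\varphi_2}\,dx\,d\xi$. The domain $\mathcal{D}(\mathcal{A})$ is the set of $\mathbb{U}=(u,v,U,V,\varphi_1,\varphi_2)\in\mathcal{H}$ such that $(U,V)\in\mathbb{H}^1_0$, $u\in H^2(-L,0)$, $v\in H^2(0,L)$, $k_1u_x(0)=k_2v_x(0)$, $|\xi|\varphi_1\in L^2(\mathbb{R};L^2(-L,0))$, $-(|\xi|^2+\eta)\varphi_1+\mu(\xi)U\in L^2(\mathbb{R};L^2(-L,0))$, $|\xi|\varphi_2\in L^2(\mathbb{R};L^2(0,L))$, $-(|\xi|^2+\eta)\varphi_2+\mu(\xi)V\in L^2(\mathbb{R};L^2(0,L))$; and $$\mathcal{A}\mathbb{U}=\Big(U,\ V,\ \tfrac{1}{\rho_1}\big[k_1u_{xx}-\mathfrak{C}\textstyle\int_{\mathbb R}\mu(\xi)\varphi_1(\cdot,\xi)d\xi\big],\ \tfrac{1}{\rho_2}\big[k_2v_{xx}-\mathfrak{C}\textstyle\int_{\mathbb R}\mu(\xi)\varphi_2(\cdot,\xi)d\xi\big],\ -(|\xi|^2+\eta)\varphi_1+\mu(\xi)U,\ -(|\xi|^2+\eta)\varphi_2+\mu(\xi)V\Big).$$ *)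

theory Defs
  imports "HOL-Analysis.Analysis"
begin

definition mu :: "real \<Rightarrow> real \<Rightarrow> real" where
  "mu \<alpha> \<xi> = \<bar>\<xi>\<bar> powr ((2 * \<alpha> - 1) / 2)"

definition Cfrak :: "real \<Rightarrow> real" where
  "Cfrak \<alpha> = sin (\<alpha> * pi) / pi"

definition L2_on :: "real set \<Rightarrow> (real \<Rightarrow> complex) \<Rightarrow> bool" where
  "L2_on S f \<longleftrightarrow> set_borel_measurable lborel S f \<and>
     set_integrable lborel S (\<lambda>x. (norm (f x))\<^sup>2)"

definition L2_strip :: "real \<Rightarrow> real \<Rightarrow> (real \<Rightarrow> real \<Rightarrow> complex) \<Rightarrow> bool" where
  "L2_strip a b \<phi> \<longleftrightarrow>
     set_borel_measurable lborel ({a<..<b} \<times> UNIV) (\<lambda>(x,\<xi>). \<phi> x \<xi>) \<and>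
     set_integrable lborel ({a<..<b} \<times> UNIV) (\<lambda>(x,\<xi>). (norm (\<phi> x \<xi>))\<^sup>2)"

text \<open>u (a continuous representative on [a,b]) belongs to H^1(a,b) with weak derivative g:
  u is the antiderivative of the L^2 function g.\<close>
definition weak_deriv_on :: "real \<Rightarrow> real \<Rightarrow> (real \<Rightarrow> complex) \<Rightarrow> (real \<Rightarrow> complex) \<Rightarrow> bool" where
  "weak_deriv_on a b u g \<longleftrightarrow> L2_on {a<..<b} g \<and>
     (\<forall>x\<in>{a..b}. u x = u a + (LINT t:{a..x}|lborel. g t))"

definition H1_on :: "real \<Rightarrow> real \<Rightarrow> (real \<Rightarrow> complex) \<Rightarrow> bool" where
  "H1_on a b u \<longleftrightarrow> (\<exists>g. weak_deriv_on a b u g)"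

definition H10 :: "real \<Rightarrow> (real \<Rightarrow> complex) \<Rightarrow> (real \<Rightarrow> complex) \<Rightarrow> bool" where
  "H10 L u v \<longleftrightarrow> H1_on (-L) 0 u \<and> H1_on 0 L v \<and> u (-L) = 0 \<and> v L = 0 \<and> u 0 = v 0"

definition in_H :: "real \<Rightarrow> (real \<Rightarrow> complex) \<Rightarrow> (real \<Rightarrow> complex) \<Rightarrow> (real \<Rightarrow> complex) \<Rightarrow>
    (real \<Rightarrow> complex) \<Rightarrow> (real \<Rightarrow> real \<Rightarrow> complex) \<Rightarrow> (real \<Rightarrow> real \<Rightarrow> complex) \<Rightarrow> bool" where
  "in_H L u v U V \<phi>1 \<phi>2 \<longleftrightarrow> H10 L u v \<and> L2_on {-L<..<0} U \<and> L2_on {0<..<L} V \<and>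
     L2_strip (-L) 0 \<phi>1 \<and> L2_strip 0 L \<phi>2"

text \<open>Being the zero element of H (u, v are continuous representatives).\<close>
definition is_zero_H :: "real \<Rightarrow> (real \<Rightarrow> complex) \<Rightarrow> (real \<Rightarrow> complex) \<Rightarrow> (real \<Rightarrow> complex) \<Rightarrow>
    (real \<Rightarrow> complex) \<Rightarrow> (real \<Rightarrow> real \<Rightarrow> complex) \<Rightarrow> (real \<Rightarrow> real \<Rightarrow> complex) \<Rightarrow> bool" where
  "is_zero_H L u v U V \<phi>1 \<phi>2 \<longleftrightarrow>
     (\<forall>x\<in>{-L..0}. u x = 0) \<and> (\<forall>x\<in>{0..L}. v x = 0) \<and>
     (AE x in lborel. x \<in> {-L<..<0} \<longrightarrow> U x = 0) \<and>
     (AE x in lborel. x \<in> {0<..<L} \<longrightarrow> V x = 0) \<and>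
     (AE p in lborel. fst p \<in> {-L<..<0} \<longrightarrow> \<phi>1 (fst p) (snd p) = 0) \<and>
     (AE p in lborel. fst p \<in> {0<..<L} \<longrightarrow> \<phi>2 (fst p) (snd p) = 0)"

text \<open>The derivatives u_x, u_xx, v_x, v_xx are given by ux, uxx, vx, vxx
  (continuous representatives for ux, vx, since u in H^2).\<close>
definition is_eigenvalue_A :: "real \<Rightarrow> real \<Rightarrow> real \<Rightarrow> real \<Rightarrow> real \<Rightarrow> real \<Rightarrow> real \<Rightarrow> complex \<Rightarrow> bool" where
  "is_eigenvalue_A \<rho>1 \<rho>2 k1 k2 L \<alpha> \<eta> z \<longleftrightarrow>
    (\<exists>u v U V \<phi>1 \<phi>2 ux uxx vx vxx.
       \<comment> \<open>element of H\<close>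
       in_H L u v U V \<phi>1 \<phi>2 \<and>
       \<comment> \<open>domain D(A)\<close>
       H10 L U V \<and>
       weak_deriv_on (-L) 0 u ux \<and> weak_deriv_on (-L) 0 ux uxx \<and>
       weak_deriv_on 0 L v vx \<and> weak_deriv_on 0 L vx vxx \<and>
       k1 * ux 0 = k2 * vx 0 \<and>
       L2_strip (-L) 0 (\<lambda>x \<xi>. of_real \<bar>\<xi>\<bar> * \<phi>1 x \<xi>) \<and>
       L2_strip (-L) 0 (\<lambda>x \<xi>. - of_real (\<bar>\<xi>\<bar>\<^sup>2 + \<eta>) * \<phi>1 x \<xi> + of_real (mu \<alpha> \<xi>) * U x) \<and>
       L2_strip 0 L (\<lambda>x \<xi>. of_real \<bar>\<xi>\<bar> * \<phi>2 x \<xi>) \<and>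
       L2_strip 0 L (\<lambda>x \<xi>. - of_real (\<bar>\<xi>\<bar>\<^sup>2 + \<eta>) * \<phi>2 x \<xi> + of_real (mu \<alpha> \<xi>) * V x) \<and>
       \<comment> \<open>nonzero\<close>
       \<not> is_zero_H L u v U V \<phi>1 \<phi>2 \<and>
       \<comment> \<open>A U = z U, componentwise\<close>
       (\<forall>x\<in>{-L..0}. U x = z * u x) \<and>
       (\<forall>x\<in>{0..L}. V x = z * v x) \<and>
       (AE x in lborel. x \<in> {-L<..<0} \<longrightarrow>
          (of_real k1 * uxx x - of_real (Cfrak \<alpha>) * (LINT \<xi>|lborel. of_real (mu \<alpha> \<xi>) * \<phi>1 x \<xi>))
            / of_real \<rho>1 = z * U x) \<and>
       (AE x in lborel. x \<in> {0<..<L} \<longrightarrow>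
          (of_real k2 * vxx x - of_real (Cfrak \<alpha>) * (LINT \<xi>|lborel. of_real (mu \<alpha> \<xi>) * \<phi>2 x \<xi>))
            / of_real \<rho>2 = z * V x) \<and>
       (AE p in lborel. fst p \<in> {-L<..<0} \<longrightarrow>
          - of_real ((snd p)\<^sup>2 + \<eta>) * \<phi>1 (fst p) (snd p) + of_real (mu \<alpha> (snd p)) * U (fst p)
            = z * \<phi>1 (fst p) (snd p)) \<and>
       (AE p in lborel. fst p \<in> {0<..<L} \<longrightarrow>
          - of_real ((snd p)\<^sup>2 + \<eta>) * \<phi>2 (fst p) (snd p) + of_real (mu \<alpha> (snd p)) * V (fst p)
            = z * \<phi>2 (fst p) (snd p)))"

end

theory Submission
  imports Defs
begin

(* On each side the memory variable solves (z + xi^2 + eta) phi = mu(xi) U, so for z = i lam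
   the eigenvalue equation reduces to k u'' = c u with c = z (rho z + C I(z)), where
   I(z) is the integral of mu^2 / (z + xi^2 + eta) over the real line.  Multiplying by the
   conjugate of u, integrating by parts and using the transmission conditions gives
   c1 |u|^2 + c2 |v|^2 + k1 |u'|^2 + k2 |v'|^2 = 0  (squared L^2 norms).
   For lam /= 0 the imaginary part of c1 and c2 is lam C Re I(z), and Re I(z) > 0 since the
   integrand has positive real part and is integrable for 0 < alpha < 1; hence
   |u| = |v| = 0.  For lam = 0 we have
   c1 = c2 = 0 and the real part gives u' = v' = 0.  Either way u = v = 0, so U = V = 0,
   and then phi = 0 almost everywhere. *)

section \<open>Weak solutions of k u'' = c u on an interval\<close>

definition L2_norm_sq :: "real \<Rightarrow> real \<Rightarrow> (real \<Rightarrow> complex) \<Rightarrow> real" where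
  "L2_norm_sq a b f = integral {a..b} (\<lambda>x. (cmod (f x))\<^sup>2)"

lemma L2_on_imp_set_integrable:
  assumes "L2_on {a<..<b} g"
  shows "set_integrable lborel {a<..<b} g"
proof (rule set_integrable_bound)
  have "set_integrable lborel {a<..<b} (\<lambda>x. 1::real)"
    using integrable_real_indicator[of "{a<..<b}" lborel] emeasure_bounded_finite[of "{a<..<b}"]
    unfolding set_integrable_def by simp
  then show "set_integrable lborel {a<..<b} (\<lambda>x. 1 + (norm (g x))\<^sup>2)"
    using assms unfolding L2_on_def by (intro set_integral_add) auto
  show "set_borel_measurable lborel {a<..<b} g"
    using assms unfolding L2_on_def by blast
  have "t \<le> 1 + t\<^sup>2" for t :: real
  proof -
    have "2 * t \<le> t\<^sup>2 + 1"
      using zero_le_power2[of "t - 1"] by (simp add: power2_diff)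
    then show ?thesis
      using zero_le_power2[of t] by linarith
  qed
  then show "AE x in lborel. x \<in> {a<..<b} \<longrightarrow> norm (g x) \<le> norm (1 + (norm (g x))\<^sup>2)"
    by simp
qed

lemma weak_deriv_on_set_integrable:
  assumes "weak_deriv_on a b u g"
  shows "set_integrable lborel {a..b} g"
proof -
  have "set_integrable lborel {a<..<b} g"
    using assms L2_on_imp_set_integrable unfolding weak_deriv_on_def by blast
  moreover have "set_integrable lborel {a<..<b} g \<longleftrightarrow> set_integrable lborel {a..b} g"
    by (rule set_integrable_discrete_difference[where X = "{a, b}"]) auto
  ultimately show ?thesis
    by blast
qed

lemma weak_deriv_on_eq_integral:
  assumes "weak_deriv_on a b u g" "x \<in> {a..b}"
  shows "u x = u a + integral {a..x} g"
proof -
  have "set_integrable lborel {a..x} g"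
    by (rule set_integrable_subset[OF weak_deriv_on_set_integrable[OF assms(1)]])
       (use assms(2) in auto)
  moreover have "u x = u a + (LINT t:{a..x}|lborel. g t)"
    using assms unfolding weak_deriv_on_def by blast
  ultimately show ?thesis
    by (simp add: set_borel_integral_eq_integral(2))
qed

lemma weak_deriv_on_continuous:
  assumes "weak_deriv_on a b u g"
  shows "continuous_on {a..b} u"
proof -
  have "g integrable_on {a..b}"
    by (rule set_borel_integral_eq_integral(1)[OF weak_deriv_on_set_integrable[OF assms]])
  then have "continuous_on {a..b} (\<lambda>x. u a + integral {a..x} g)"
    by (intro continuous_intros indefinite_integral_continuous_1)
  then show ?thesis
    by (rule continuous_on_eq) (rule weak_deriv_on_eq_integral[OF assms, symmetric])
qed

lemma weak_deriv_on_has_vector_derivative: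
  assumes "weak_deriv_on a b u g" "continuous_on {a..b} g" "x \<in> {a..b}"
  shows "(u has_vector_derivative g x) (at x within {a..b})"
proof (rule has_vector_derivative_transform[OF assms(3)])
  show "u y = u a + integral {a..y} g" if "y \<in> {a..b}" for y
    using weak_deriv_on_eq_integral[OF assms(1) that] .
  show "((\<lambda>y. u a + integral {a..y} g) has_vector_derivative g x) (at x within {a..b})"
    using has_vector_derivative_add[OF has_vector_derivative_const
        integral_has_vector_derivative[OF assms(2,3)]] by simp
qed

lemma weak_deriv_on_zero_imp_const:
  assumes "weak_deriv_on a b u g" "\<forall>x\<in>{a..b}. g x = 0" "x \<in> {a..b}"
  shows "u x = u a"
proof -
  have "integral {a..x} g = integral {a..x} (\<lambda>_. 0)"
    by (rule integral_cong) (use assms(2,3) in auto)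
  then show ?thesis
    using weak_deriv_on_eq_integral[OF assms(1,3)] by simp
qed

lemma integral_cong_AE_lborel:
  fixes f g :: "real \<Rightarrow> 'a::banach"
  assumes "AE x in lborel. x \<in> {a<..<b} \<longrightarrow> f x = g x" "y \<le> b"
  shows "integral {a..y} f = integral {a..y} g"
proof -
  from AE_completion[OF assms(1)] obtain N
    where N: "negligible N" "{x. \<not> (x \<in> {a<..<b} \<longrightarrow> f x = g x)} \<subseteq> N"
    unfolding eventually_ae_filter_negligible by blast
  show ?thesis
  proof (rule integral_spike[of "N \<union> {a, b}"])
    show "negligible (N \<union> {a, b})"
      using N(1) by (simp add: negligible_Un)
  qed (use N(2) assms(2) in force)
qed

lemma weak_ode_has_vector_derivative:
  fixes c :: complex
  assumes "weak_deriv_on a b u ux" "weak_deriv_on a b ux uxx" "k \<noteq> 0"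
    and "AE x in lborel. x \<in> {a<..<b} \<longrightarrow> of_real k * uxx x = c * u x"
    and "x \<in> {a..b}"
  shows "(ux has_vector_derivative (c / of_real k * u x)) (at x within {a..b})"
proof -
  have ode: "AE t in lborel. t \<in> {a<..<b} \<longrightarrow> uxx t = c / of_real k * u t"
    using assms(4) by eventually_elim (use assms(3) in \<open>auto simp: field_simps\<close>)
  have cont: "continuous_on {a..b} (\<lambda>t. c / of_real k * u t)"
    by (intro continuous_intros weak_deriv_on_continuous[OF assms(1)])
  show ?thesis
  proof (rule has_vector_derivative_transform[OF assms(5)])
    show "ux y = ux a + integral {a..y} (\<lambda>t. c / of_real k * u t)" if "y \<in> {a..b}" for y
      using weak_deriv_on_eq_integral[OF assms(2) that] integral_cong_AE_lborel[OF ode, of y] that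
      by simp
    show "((\<lambda>y. ux a + integral {a..y} (\<lambda>t. c / of_real k * u t))
        has_vector_derivative c / of_real k * u x) (at x within {a..b})"
      using has_vector_derivative_add[OF has_vector_derivative_const
          integral_has_vector_derivative[OF cont assms(5)]] by simp
  qed
qed

lemma weak_ode_energy_identity:
  fixes c :: complex
  assumes "a \<le> b" "weak_deriv_on a b u ux" "weak_deriv_on a b ux uxx" "k \<noteq> 0"
    and "AE x in lborel. x \<in> {a<..<b} \<longrightarrow> of_real k * uxx x = c * u x"
  shows "c * of_real (L2_norm_sq a b u) + of_real (k * L2_norm_sq a b ux)
    = of_real k * (ux b * cnj (u b) - ux a * cnj (u a))"
proof -
  let ?h = "\<lambda>x. c / of_real k * of_real ((cmod (u x))\<^sup>2) + of_real ((cmod (ux x))\<^sup>2)"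
  have cont: "continuous_on {a..b} u" "continuous_on {a..b} ux"
    using weak_deriv_on_continuous assms(2,3) by blast+
  have "(?h has_integral (ux b * cnj (u b) - ux a * cnj (u a))) {a..b}"
  proof (rule fundamental_theorem_of_calculus[OF assms(1)])
    fix x assume x: "x \<in> {a..b}"
    show "((\<lambda>x. ux x * cnj (u x)) has_vector_derivative ?h x) (at x within {a..b})"
      using has_vector_derivative_mult[OF weak_ode_has_vector_derivative[OF assms(2-5) x]
          has_vector_derivative_cnj[OF weak_deriv_on_has_vector_derivative[OF assms(2) cont(2) x]]]
      by (simp add: algebra_simps complex_norm_square del: of_real_power)
  qed
  moreover have "(?h has_integral
      (c / of_real k * of_real (L2_norm_sq a b u) + of_real (L2_norm_sq a b ux))) {a..b}"
    unfolding L2_norm_sq_def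
    by (intro has_integral_add has_integral_mult_right has_integral_of_real integrable_integral
        integrable_continuous_interval continuous_intros cont)
  ultimately have "c / of_real k * of_real (L2_norm_sq a b u) + of_real (L2_norm_sq a b ux)
      = ux b * cnj (u b) - ux a * cnj (u a)"
    using has_integral_unique by blast
  then show ?thesis
    using assms(4) by (simp add: field_simps)
qed

lemma L2_norm_sq_nonneg:
  assumes "continuous_on {a..b} f"
  shows "0 \<le> L2_norm_sq a b f"
  unfolding L2_norm_sq_def
  by (rule integral_nonneg) (auto intro!: integrable_continuous_interval continuous_intros assms)

lemma L2_norm_sq_eq_0_imp_zero:
  assumes "a < b" "continuous_on {a..b} f" "L2_norm_sq a b f = 0" "x \<in> {a..b}"
  shows "f x = 0"
proof -
  have "continuous_on (cbox a b) (\<lambda>x. (cmod (f x))\<^sup>2)"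
    by (intro continuous_intros) (simp add: assms(2))
  then have "\<forall>x\<in>cbox a b. (cmod (f x))\<^sup>2 = 0"
    using integral_cbox_eq_0_iff[of a b "\<lambda>x. (cmod (f x))\<^sup>2"] assms(1,3)
    unfolding L2_norm_sq_def by simp
  then show ?thesis
    using assms(4) by simp
qed

lemma transmission_energy_identity:
  fixes c1 c2 :: complex
  assumes "a \<le> m" "m \<le> b" "k1 \<noteq> 0" "k2 \<noteq> 0"
    and "weak_deriv_on a m u ux" "weak_deriv_on a m ux uxx"
    and "weak_deriv_on m b v vx" "weak_deriv_on m b vx vxx"
    and "AE x in lborel. x \<in> {a<..<m} \<longrightarrow> of_real k1 * uxx x = c1 * u x"
    and "AE x in lborel. x \<in> {m<..<b} \<longrightarrow> of_real k2 * vxx x = c2 * v x"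
    and "u a = 0" "v b = 0" "u m = v m" "of_real k1 * ux m = of_real k2 * vx m"
  shows "c1 * of_real (L2_norm_sq a m u) + c2 * of_real (L2_norm_sq m b v)
    + of_real (k1 * L2_norm_sq a m ux + k2 * L2_norm_sq m b vx) = 0"
proof -
  have "c1 * of_real (L2_norm_sq a m u) + of_real (k1 * L2_norm_sq a m ux)
      = of_real k1 * ux m * cnj (u m)"
    using weak_ode_energy_identity[OF assms(1,5,6,3,9)] assms(11) by simp
  moreover have "c2 * of_real (L2_norm_sq m b v) + of_real (k2 * L2_norm_sq m b vx)
      = - (of_real k2 * vx m * cnj (v m))"
    using weak_ode_energy_identity[OF assms(2,7,8,4,10)] assms(12) by simp
  ultimately show ?thesis
    using assms(13,14) by (simp add: algebra_simps)
qed

lemma energy_identity_cases: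
  fixes c1 c2 :: complex
  assumes E: "c1 * of_real Nu + c2 * of_real Nv + of_real (k1 * Du + k2 * Dv) = 0"
    and nonneg: "0 \<le> Nu" "0 \<le> Nv" "0 \<le> Du" "0 \<le> Dv" and "0 < k1" "0 < k2"
    and "0 < Im c1 * Im c2 \<or> (0 \<le> Re c1 \<and> 0 \<le> Re c2)"
  shows "(Nu = 0 \<and> Nv = 0) \<or> (Du = 0 \<and> Dv = 0)"
  using assms(8)
proof
  assume Im: "0 < Im c1 * Im c2"
  have I: "Im c1 * Nu + Im c2 * Nv = 0"
    using arg_cong[OF E, of Im] by simp
  have "Im c1 * Im c1 * Nu + Im c1 * Im c2 * Nv = 0" "Im c1 * Im c2 * Nu + Im c2 * Im c2 * Nv = 0"
    using arg_cong[OF I, of "(*) (Im c1)"] arg_cong[OF I, of "(*) (Im c2)"]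
    by (simp_all add: algebra_simps)
  moreover have "0 \<le> Im c1 * Im c1 * Nu" "0 \<le> Im c1 * Im c2 * Nv"
      "0 \<le> Im c1 * Im c2 * Nu" "0 \<le> Im c2 * Im c2 * Nv"
    using Im nonneg(1,2) by (auto intro: mult_nonneg_nonneg)
  ultimately have "Im c1 * Im c1 * Nu = 0" "Im c2 * Im c2 * Nv = 0"
    by linarith+
  then show ?thesis
    using Im by auto
next
  assume Re: "0 \<le> Re c1 \<and> 0 \<le> Re c2"
  have "Re c1 * Nu + Re c2 * Nv + (k1 * Du + k2 * Dv) = 0"
    using arg_cong[OF E, of Re] by simp
  moreover have "0 \<le> Re c1 * Nu" "0 \<le> Re c2 * Nv" "0 \<le> k1 * Du" "0 \<le> k2 * Dv"
    using Re nonneg assms(6,7) by simp_all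
  ultimately have "k1 * Du = 0" "k2 * Dv = 0"
    by linarith+
  then show ?thesis
    using assms(6,7) by simp
qed

lemma transmission_problem_trivial:
  fixes c1 c2 :: complex
  assumes "a < m" "m < b" "0 < k1" "0 < k2"
    and wu: "weak_deriv_on a m u ux" and wux: "weak_deriv_on a m ux uxx"
    and wv: "weak_deriv_on m b v vx" and wvx: "weak_deriv_on m b vx vxx"
    and "AE x in lborel. x \<in> {a<..<m} \<longrightarrow> of_real k1 * uxx x = c1 * u x"
    and "AE x in lborel. x \<in> {m<..<b} \<longrightarrow> of_real k2 * vxx x = c2 * v x"
    and "u a = 0" "v b = 0" "u m = v m" "of_real k1 * ux m = of_real k2 * vx m"
    and "0 < Im c1 * Im c2 \<or> (0 \<le> Re c1 \<and> 0 \<le> Re c2)"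
  shows "\<forall>x\<in>{a..m}. u x = 0" "\<forall>x\<in>{m..b}. v x = 0"
proof -
  have cont: "continuous_on {a..m} u" "continuous_on {a..m} ux"
      "continuous_on {m..b} v" "continuous_on {m..b} vx"
    using wu wux wv wvx by (blast intro: weak_deriv_on_continuous)+
  have "(L2_norm_sq a m u = 0 \<and> L2_norm_sq m b v = 0) \<or> (L2_norm_sq a m ux = 0 \<and> L2_norm_sq m b vx = 0)"
  proof (rule energy_identity_cases)
    show "c1 * of_real (L2_norm_sq a m u) + c2 * of_real (L2_norm_sq m b v)
        + of_real (k1 * L2_norm_sq a m ux + k2 * L2_norm_sq m b vx) = 0"
      using assms(1-4,9-14) by (intro transmission_energy_identity[OF _ _ _ _ wu wux wv wvx]) simp_all
  qed (use cont assms(3,4,15) in \<open>simp_all add: L2_norm_sq_nonneg\<close>)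
  then have "(\<forall>x\<in>{a..m}. u x = 0) \<and> (\<forall>x\<in>{m..b}. v x = 0)"
  proof
    assume "L2_norm_sq a m u = 0 \<and> L2_norm_sq m b v = 0"
    then show ?thesis
      using L2_norm_sq_eq_0_imp_zero[OF assms(1) cont(1)] L2_norm_sq_eq_0_imp_zero[OF assms(2) cont(3)]
      by blast
  next
    assume "L2_norm_sq a m ux = 0 \<and> L2_norm_sq m b vx = 0"
    then have "\<forall>x\<in>{a..m}. ux x = 0" "\<forall>x\<in>{m..b}. vx x = 0"
      using L2_norm_sq_eq_0_imp_zero[OF assms(1) cont(2)] L2_norm_sq_eq_0_imp_zero[OF assms(2) cont(4)]
      by blast+
    then show ?thesis
      using weak_deriv_on_zero_imp_const[OF wu] weak_deriv_on_zero_imp_const[OF wv] assms(1,11,13)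
      by auto
  qed
  then show "\<forall>x\<in>{a..m}. u x = 0" "\<forall>x\<in>{m..b}. v x = 0"
    by blast+
qed

section \<open>The kernel integral\<close>

lemma mu_squared: "(mu \<alpha> \<xi>)\<^sup>2 = \<bar>\<xi>\<bar> powr (2 * \<alpha> - 1)"
  by (simp add: mu_def power2_eq_square flip: powr_add)

lemma add_of_real_pos_neq_zero:
  assumes "0 \<le> Re z" "0 < s"
  shows "z + of_real s \<noteq> 0"
proof
  assume "z + of_real s = 0"
  then have "Re (z + of_real s) = 0"
    by simp
  with assms show False
    by simp
qed

lemma norm_le_norm_add_nonneg_real:
  assumes "0 \<le> Re z" "0 \<le> s"
  shows "cmod z \<le> cmod (z + of_real s)"
  unfolding cmod_def using assms by (auto intro!: real_sqrt_le_mono power_mono)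

lemma set_integrable_powr_piecewise:
  assumes "-1 < e1" "e2 < -1"
  shows "set_integrable lborel {0<..} (\<lambda>x::real. if x \<le> 1 then x powr e1 else x powr e2)"
proof -
  define k where "k x = (if x \<le> 1 then x powr e1 else x powr e2)" for x :: real
  have "k integrable_on {0<..1}"
    by (rule integrable_eq[OF integrable_on_powr_from_0'[OF assms(1) zero_le_one]]) (simp add: k_def)
  moreover have "k integrable_on {1..}"
  proof (rule integrable_eq)
    show "(\<lambda>x. x powr e2) integrable_on {1..}"
      using has_integral_powr_to_inf[OF assms(2) zero_less_one] unfolding integrable_on_def by blast
    show "x powr e2 = k x" if "x \<in> {1..}" for x
      using that by (cases "x = 1") (simp_all add: k_def)
  qed
  moreover have "{0<..1} \<inter> {1..} = {1::real}" "{0<..1} \<union> {1..} = {0::real<..}"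
    by auto
  ultimately have "k integrable_on {0<..}"
    using integrable_Un[of "{0<..1}" "{1..}" k] by simp
  then have "k absolutely_integrable_on {0<..}"
    by (rule nonnegative_absolutely_integrable_1) (simp add: k_def)
  moreover have "(\<lambda>x. indicator {0<..} x *\<^sub>R k x) \<in> borel_measurable lborel"
    unfolding k_def by measurable
  ultimately have "set_integrable lborel {0<..} k"
    unfolding set_integrable_def by (simp add: integrable_completion)
  then show ?thesis
    unfolding k_def .
qed

lemma integrable_abs_powr_piecewise:
  assumes "-1 < e1" "e2 < -1"
  shows "integrable lborel (\<lambda>x::real. if \<bar>x\<bar> \<le> 1 then \<bar>x\<bar> powr e1 else \<bar>x\<bar> powr e2)"
proof -
  define K where "K x = indicator {0<..} x *\<^sub>R (if x \<le> 1 then x powr e1 else x powr e2)" for x :: real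
  have "integrable lborel K"
    using set_integrable_powr_piecewise[OF assms] unfolding set_integrable_def K_def .
  moreover from this have "integrable lborel (\<lambda>x. K (-x))"
    using lborel_integrable_real_affine_iff[of "-1" K 0] by simp
  ultimately have "integrable lborel (\<lambda>x. K x + K (-x))"
    by (rule Bochner_Integration.integrable_add)
  moreover have "K x + K (-x) = (if \<bar>x\<bar> \<le> 1 then \<bar>x\<bar> powr e1 else \<bar>x\<bar> powr e2)" for x
    by (auto simp: K_def indicator_def)
  ultimately show ?thesis
    by simp
qed

definition kernel_integral :: "real \<Rightarrow> real \<Rightarrow> complex \<Rightarrow> complex" where
  "kernel_integral \<alpha> \<eta> z = (LINT \<xi>|lborel. of_real ((mu \<alpha> \<xi>)\<^sup>2) / (z + of_real (\<xi>\<^sup>2 + \<eta>)))"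

lemma kernel_integrand_bound:
  assumes "0 \<le> \<eta>" "0 \<le> Re z" "z \<noteq> 0"
  shows "cmod (of_real ((mu \<alpha> \<xi>)\<^sup>2) / (z + of_real (\<xi>\<^sup>2 + \<eta>)))
    \<le> (1 / cmod z + 1) * (if \<bar>\<xi>\<bar> \<le> 1 then \<bar>\<xi>\<bar> powr (2 * \<alpha> - 1) else \<bar>\<xi>\<bar> powr (2 * \<alpha> - 3))"
proof (cases "\<xi> = 0")
  case True
  then show ?thesis
    by (simp add: mu_def)
next
  case False
  define d where "d = z + of_real (\<xi>\<^sup>2 + \<eta>)"
  define t where "t = \<bar>\<xi>\<bar>"
  have t: "0 < t"
    using False by (simp add: t_def)
  have d_ge_z: "cmod z \<le> cmod d"
    unfolding d_def using assms(1,2) by (intro norm_le_norm_add_nonneg_real) simp_all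
  have d_ge_t: "t\<^sup>2 \<le> cmod d"
    using abs_Re_le_cmod[of d] assms(1,2) by (simp add: d_def t_def)
  have z: "0 < cmod z"
    using assms(3) by simp
  have d: "0 < cmod d"
    using d_ge_z z by linarith
  have norm_eq: "cmod (of_real ((mu \<alpha> \<xi>)\<^sup>2) / d) = t powr (2 * \<alpha> - 1) / cmod d"
    by (simp add: mu_squared norm_divide t_def)
  show ?thesis
  proof (cases "t \<le> 1")
    case True
    have "t powr (2 * \<alpha> - 1) / cmod d \<le> t powr (2 * \<alpha> - 1) / cmod z"
      using d_ge_z z d by (intro divide_left_mono) simp_all
    also have "\<dots> \<le> (1 / cmod z + 1) * t powr (2 * \<alpha> - 1)"
      by (simp add: algebra_simps)
    finally show ?thesis
      using True norm_eq by (simp add: d_def t_def)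
  next
    case False
    have "t powr (2 * \<alpha> - 1) / cmod d \<le> t powr (2 * \<alpha> - 1) / t\<^sup>2"
      using d_ge_t t d by (intro divide_left_mono) simp_all
    also have "\<dots> = t powr (2 * \<alpha> - 1) / t powr 2"
      using t by simp
    also have "\<dots> = t powr (2 * \<alpha> - 3)"
      by (simp add: powr_diff[symmetric])
    also have "\<dots> \<le> (1 / cmod z + 1) * t powr (2 * \<alpha> - 3)"
      by (simp add: algebra_simps)
    finally show ?thesis
      using False norm_eq by (simp add: d_def t_def)
  qed
qed

lemma integrable_kernel:
  assumes "0 < \<alpha>" "\<alpha> < 1" "0 \<le> \<eta>" "0 \<le> Re z" "z \<noteq> 0"
  shows "integrable lborel (\<lambda>\<xi>. of_real ((mu \<alpha> \<xi>)\<^sup>2) / (z + of_real (\<xi>\<^sup>2 + \<eta>)))"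
proof (rule Bochner_Integration.integrable_bound)
  show "integrable lborel (\<lambda>\<xi>. (1 / cmod z + 1) *
      (if \<bar>\<xi>\<bar> \<le> 1 then \<bar>\<xi>\<bar> powr (2 * \<alpha> - 1) else \<bar>\<xi>\<bar> powr (2 * \<alpha> - 3)))"
    using integrable_abs_powr_piecewise[of "2 * \<alpha> - 1" "2 * \<alpha> - 3"] assms(1,2) by simp
  show "(\<lambda>\<xi>. of_real ((mu \<alpha> \<xi>)\<^sup>2) / (z + of_real (\<xi>\<^sup>2 + \<eta>))) \<in> borel_measurable lborel"
    unfolding mu_def by measurable
  show "AE \<xi> in lborel. norm (of_real ((mu \<alpha> \<xi>)\<^sup>2) / (z + of_real (\<xi>\<^sup>2 + \<eta>)))
      \<le> norm ((1 / cmod z + 1) *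
        (if \<bar>\<xi>\<bar> \<le> 1 then \<bar>\<xi>\<bar> powr (2 * \<alpha> - 1) else \<bar>\<xi>\<bar> powr (2 * \<alpha> - 3)))"
    by (intro AE_I2 order_trans[OF kernel_integrand_bound[OF assms(3-5)]]) simp
qed

lemma Re_kernel_integral_pos:
  assumes "0 < \<alpha>" "\<alpha> < 1" "0 \<le> \<eta>" "0 \<le> Re z" "z \<noteq> 0"
  shows "0 < Re (kernel_integral \<alpha> \<eta> z)"
proof -
  define f where "f \<xi> = of_real ((mu \<alpha> \<xi>)\<^sup>2) / (z + of_real (\<xi>\<^sup>2 + \<eta>))" for \<xi>
  have int: "integrable lborel (\<lambda>\<xi>. Re (f \<xi>))"
    unfolding f_def by (rule integrable_Re[OF integrable_kernel[OF assms]])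
  have Re_f: "Re (f \<xi>) = (mu \<alpha> \<xi>)\<^sup>2 * (Re z + \<xi>\<^sup>2 + \<eta>) / (cmod (z + of_real (\<xi>\<^sup>2 + \<eta>)))\<^sup>2" for \<xi>
    by (simp add: f_def Re_divide')
  have nonneg: "0 \<le> Re (f \<xi>)" for \<xi>
    unfolding Re_f using assms(3,4) by simp
  have pos: "0 < Re (f \<xi>)" if "\<xi> \<noteq> 0" for \<xi>
  proof -
    have "z + of_real (\<xi>\<^sup>2 + \<eta>) \<noteq> 0"
      using that assms(3,4) by (intro add_of_real_pos_neq_zero) (simp_all add: add_pos_nonneg)
    then show ?thesis
      unfolding Re_f using that assms(3,4) by (simp add: mu_squared add_nonneg_pos add_pos_nonneg)
  qed
  have "integral\<^sup>L lborel (\<lambda>\<xi>. Re (f \<xi>)) \<noteq> 0"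
  proof
    assume "integral\<^sup>L lborel (\<lambda>\<xi>. Re (f \<xi>)) = 0"
    then have "AE \<xi> in lborel. Re (f \<xi>) = 0"
      using integral_nonneg_eq_0_iff_AE[OF int] nonneg by simp
    moreover have "AE \<xi> in lborel. Re (f \<xi>) \<noteq> 0"
      using AE_lborel_singleton[of 0] by (rule eventually_mono) (use pos in force)
    ultimately have "AE \<xi> in lborel. Re (f \<xi>) = 0 \<and> Re (f \<xi>) \<noteq> 0"
      by (rule eventually_conj)
    then show False
      by (simp add: ae_filter_eq_bot_iff)
  qed
  moreover have "0 \<le> integral\<^sup>L lborel (\<lambda>\<xi>. Re (f \<xi>))"
    using nonneg by simp
  ultimately show ?thesis
    using integrable_kernel[OF assms] unfolding kernel_integral_def f_def by simp
qed

section \<open>Eliminating the memory variable\<close>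

lemma resolvent_solution:
  fixes z m w p :: complex
  assumes "0 \<le> Re z" "0 < s" "- of_real s * p + m * w = z * p"
  shows "p = m * w / (z + of_real s)"
proof -
  have "z + of_real s \<noteq> 0"
    using assms(1,2) by (rule add_of_real_pos_neq_zero)
  moreover have "(z + of_real s) * p = m * w"
    using assms(3) by (simp add: algebra_simps)
  ultimately show ?thesis
    by (simp add: field_simps)
qed

lemma AE_lborel_pair_sections:
  assumes "AE p in (lborel :: (real \<times> real) measure). P (fst p) (snd p)"
  shows "AE x in lborel. AE \<xi> in lborel. P x \<xi>"
proof -
  have "AE p in (lborel \<Otimes>\<^sub>M lborel :: (real \<times> real) measure). P (fst p) (snd p)"
    using assms by (simp only: lborel_prod)
  then show ?thesis
    using lborel_pair.AE_pair[of "\<lambda>p. P (fst p) (snd p)"] by simp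
qed

lemma AE_lborel_snd_neq: "AE p in (lborel :: (real \<times> real) measure). snd p \<noteq> c"
proof -
  have "AE p in (lborel \<Otimes>\<^sub>M lborel :: (real \<times> real) measure). snd p \<noteq> c"
  proof (rule lborel_pair.AE_pair_measure)
    show "{p \<in> space (lborel \<Otimes>\<^sub>M lborel). snd p \<noteq> c} \<in> sets (lborel \<Otimes>\<^sub>M (lborel :: real measure))"
      by measurable
  qed (simp add: AE_lborel_singleton)
  then show ?thesis
    by (simp only: lborel_prod)
qed

lemma L2_strip_section_measurable:
  assumes "L2_strip a b \<phi>" "x \<in> {a<..<b}"
  shows "\<phi> x \<in> borel_measurable lborel"
proof -
  let ?f = "\<lambda>p. indicator ({a<..<b} \<times> UNIV) p *\<^sub>R (case p of (x, \<xi>) \<Rightarrow> \<phi> x \<xi>)"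
  have "?f \<in> borel_measurable (lborel \<Otimes>\<^sub>M lborel)"
    using assms(1) unfolding L2_strip_def set_borel_measurable_def by (simp add: lborel_prod)
  then have "(\<lambda>\<xi>. ?f (x, \<xi>)) \<in> borel_measurable lborel"
    by (rule measurable_Pair2) simp
  moreover have "(\<lambda>\<xi>. ?f (x, \<xi>)) = \<phi> x"
    using assms(2) by (simp add: indicator_def)
  ultimately show ?thesis
    by simp
qed

lemma memory_integral_eq:
  fixes \<phi> :: "real \<Rightarrow> real \<Rightarrow> complex"
  assumes meas: "\<forall>x\<in>S. \<phi> x \<in> borel_measurable lborel"
    and "0 \<le> \<eta>" "0 \<le> Re z"
    and eq: "AE p in lborel. fst p \<in> S \<longrightarrow>
      - of_real ((snd p)\<^sup>2 + \<eta>) * \<phi> (fst p) (snd p) + of_real (mu \<alpha> (snd p)) * U (fst p)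
        = z * \<phi> (fst p) (snd p)"
  shows "AE x in lborel. x \<in> S \<longrightarrow>
    (LINT \<xi>|lborel. of_real (mu \<alpha> \<xi>) * \<phi> x \<xi>) = U x * kernel_integral \<alpha> \<eta> z"
  using AE_lborel_pair_sections[OF eq]
proof eventually_elim
  case (elim x)
  show ?case
  proof
    assume x: "x \<in> S"
    have ae: "AE \<xi> in lborel. of_real (mu \<alpha> \<xi>) * \<phi> x \<xi>
        = U x * (of_real ((mu \<alpha> \<xi>)\<^sup>2) / (z + of_real (\<xi>\<^sup>2 + \<eta>)))"
      using elim AE_lborel_singleton[of 0]
    proof eventually_elim
      case (elim \<xi>)
      have s: "0 < \<xi>\<^sup>2 + \<eta>"
        using elim(2) assms(2) by (simp add: add_pos_nonneg)
      have "\<phi> x \<xi> = of_real (mu \<alpha> \<xi>) * U x / (z + of_real (\<xi>\<^sup>2 + \<eta>))"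
        by (rule resolvent_solution[OF assms(3) s elim(1)[rule_format, OF x]])
      then show ?case
        by (simp add: power2_eq_square)
    qed
    have "(LINT \<xi>|lborel. of_real (mu \<alpha> \<xi>) * \<phi> x \<xi>)
        = (LINT \<xi>|lborel. U x * (of_real ((mu \<alpha> \<xi>)\<^sup>2) / (z + of_real (\<xi>\<^sup>2 + \<eta>))))"
    proof (rule integral_cong_AE[OF _ _ ae])
      have "\<phi> x \<in> borel_measurable lborel"
        using meas x by blast
      then show "(\<lambda>\<xi>. of_real (mu \<alpha> \<xi>) * \<phi> x \<xi>) \<in> borel_measurable lborel"
        unfolding mu_def by measurable
      show "(\<lambda>\<xi>. U x * (of_real ((mu \<alpha> \<xi>)\<^sup>2) / (z + of_real (\<xi>\<^sup>2 + \<eta>))))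
          \<in> borel_measurable lborel"
        unfolding mu_def by measurable
    qed
    then show "(LINT \<xi>|lborel. of_real (mu \<alpha> \<xi>) * \<phi> x \<xi>) = U x * kernel_integral \<alpha> \<eta> z"
      unfolding kernel_integral_def by (simp only: integral_mult_right_zero)
  qed
qed

lemma memory_vanishes:
  fixes \<phi> :: "real \<Rightarrow> real \<Rightarrow> complex"
  assumes "0 \<le> \<eta>" "0 \<le> Re z" "\<And>x. x \<in> S \<Longrightarrow> U x = 0"
    and eq: "AE p in lborel. fst p \<in> S \<longrightarrow>
      - of_real ((snd p)\<^sup>2 + \<eta>) * \<phi> (fst p) (snd p) + of_real (mu \<alpha> (snd p)) * U (fst p)
        = z * \<phi> (fst p) (snd p)"
  shows "AE p in lborel. fst p \<in> S \<longrightarrow> \<phi> (fst p) (snd p) = 0"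
  using eq AE_lborel_snd_neq[of 0]
proof eventually_elim
  case (elim p)
  show ?case
  proof
    assume S: "fst p \<in> S"
    have s: "0 < (snd p)\<^sup>2 + \<eta>"
      using elim assms(1) by (simp add: add_pos_nonneg)
    from resolvent_solution[OF assms(2) s elim(1)[rule_format, OF S]] show "\<phi> (fst p) (snd p) = 0"
      using assms(3)[OF S] by simp
  qed
qed

lemma Cfrak_pos: "0 < \<alpha> \<Longrightarrow> \<alpha> < 1 \<Longrightarrow> 0 < Cfrak \<alpha>"
  unfolding Cfrak_def by (intro divide_pos_pos sin_gt_zero) simp_all

definition reduced_coeff :: "real \<Rightarrow> real \<Rightarrow> real \<Rightarrow> complex \<Rightarrow> complex" where
  "reduced_coeff \<rho> \<alpha> \<eta> z = z * (of_real \<rho> * z + of_real (Cfrak \<alpha>) * kernel_integral \<alpha> \<eta> z)"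

lemma eigen_row_imp_reduced_ode:
  fixes \<phi> :: "real \<Rightarrow> real \<Rightarrow> complex"
  assumes "\<rho> \<noteq> 0" "0 \<le> \<eta>" "0 \<le> Re z" "L2_strip a b \<phi>"
    and Uu: "\<forall>x\<in>{a..b}. U x = z * u x"
    and row: "AE x in lborel. x \<in> {a<..<b} \<longrightarrow>
      (of_real k * uxx x - of_real (Cfrak \<alpha>) * (LINT \<xi>|lborel. of_real (mu \<alpha> \<xi>) * \<phi> x \<xi>))
        / of_real \<rho> = z * U x"
    and mem: "AE p in lborel. fst p \<in> {a<..<b} \<longrightarrow>
      - of_real ((snd p)\<^sup>2 + \<eta>) * \<phi> (fst p) (snd p) + of_real (mu \<alpha> (snd p)) * U (fst p)
        = z * \<phi> (fst p) (snd p)"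
  shows "AE x in lborel. x \<in> {a<..<b} \<longrightarrow> of_real k * uxx x = reduced_coeff \<rho> \<alpha> \<eta> z * u x"
proof -
  have "\<forall>x\<in>{a<..<b}. \<phi> x \<in> borel_measurable lborel"
    using L2_strip_section_measurable[OF assms(4)] by blast
  from row memory_integral_eq[OF this assms(2,3) mem]
  show ?thesis
  proof eventually_elim
    case (elim x)
    show ?case
    proof
      assume x: "x \<in> {a<..<b}"
      then have "U x = z * u x"
        using Uu by auto
      with elim x assms(1) show "of_real k * uxx x = reduced_coeff \<rho> \<alpha> \<eta> z * u x"
        by (simp add: reduced_coeff_def field_simps)
    qed
  qed
qed

lemma reduced_coeff_sign:
  assumes "0 < \<alpha>" "\<alpha> < 1" "0 \<le> \<eta>" "Re z = 0"
  shows "0 < Im (reduced_coeff \<rho>1 \<alpha> \<eta> z) * Im (reduced_coeff \<rho>2 \<alpha> \<eta> z)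
    \<or> (0 \<le> Re (reduced_coeff \<rho>1 \<alpha> \<eta> z) \<and> 0 \<le> Re (reduced_coeff \<rho>2 \<alpha> \<eta> z))"
proof (cases "z = 0")
  case False
  define g where "g = Im z * Cfrak \<alpha> * Re (kernel_integral \<alpha> \<eta> z)"
  have "Im (reduced_coeff \<rho> \<alpha> \<eta> z) = g" for \<rho>
    using assms(4) by (simp add: reduced_coeff_def g_def algebra_simps)
  moreover have "0 < Re (kernel_integral \<alpha> \<eta> z)"
    using assms False by (intro Re_kernel_integral_pos) simp_all
  moreover have "Im z \<noteq> 0"
    using assms(4) False complex_eq_iff by auto
  ultimately have "g \<noteq> 0" "Im (reduced_coeff \<rho>1 \<alpha> \<eta> z) * Im (reduced_coeff \<rho>2 \<alpha> \<eta> z) = g\<^sup>2"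
    using Cfrak_pos[OF assms(1,2)] by (simp_all add: g_def power2_eq_square)
  then show ?thesis
    by simp
qed (simp add: reduced_coeff_def)

theorem corollary4p3:
  fixes \<rho>1 \<rho>2 k1 k2 L \<alpha> \<eta> lam :: real
  assumes "\<rho>1 > 0" "\<rho>2 > 0" "k1 > 0" "k2 > 0" "L > 0"
    and "0 < \<alpha>" "\<alpha> < 1" "\<eta> \<ge> 0"
  shows "\<not> is_eigenvalue_A \<rho>1 \<rho>2 k1 k2 L \<alpha> \<eta> (\<i> * complex_of_real lam)"
proof
  define z where "z = \<i> * complex_of_real lam"
  assume "is_eigenvalue_A \<rho>1 \<rho>2 k1 k2 L \<alpha> \<eta> (\<i> * complex_of_real lam)"
  then obtain u v U V ux uxx vx vxx :: "real \<Rightarrow> complex" and \<phi>1 \<phi>2 where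
      H10: "H10 L u v" and strips: "L2_strip (-L) 0 \<phi>1" "L2_strip 0 L \<phi>2"
    and derivs: "weak_deriv_on (-L) 0 u ux" "weak_deriv_on (-L) 0 ux uxx"
      "weak_deriv_on 0 L v vx" "weak_deriv_on 0 L vx vxx"
    and transmission: "of_real k1 * ux 0 = of_real k2 * vx 0"
    and nonzero: "\<not> is_zero_H L u v U V \<phi>1 \<phi>2"
    and Uu: "\<forall>x\<in>{-L..0}. U x = z * u x" and Vv: "\<forall>x\<in>{0..L}. V x = z * v x"
    and row_u: "AE x in lborel. x \<in> {-L<..<0} \<longrightarrow>
      (of_real k1 * uxx x - of_real (Cfrak \<alpha>) * (LINT \<xi>|lborel. of_real (mu \<alpha> \<xi>) * \<phi>1 x \<xi>))
        / of_real \<rho>1 = z * U x"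
    and row_v: "AE x in lborel. x \<in> {0<..<L} \<longrightarrow>
      (of_real k2 * vxx x - of_real (Cfrak \<alpha>) * (LINT \<xi>|lborel. of_real (mu \<alpha> \<xi>) * \<phi>2 x \<xi>))
        / of_real \<rho>2 = z * V x"
    and mem_u: "AE p in lborel. fst p \<in> {-L<..<0} \<longrightarrow>
      - of_real ((snd p)\<^sup>2 + \<eta>) * \<phi>1 (fst p) (snd p) + of_real (mu \<alpha> (snd p)) * U (fst p)
        = z * \<phi>1 (fst p) (snd p)"
    and mem_v: "AE p in lborel. fst p \<in> {0<..<L} \<longrightarrow>
      - of_real ((snd p)\<^sup>2 + \<eta>) * \<phi>2 (fst p) (snd p) + of_real (mu \<alpha> (snd p)) * V (fst p)
        = z * \<phi>2 (fst p) (snd p)"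
    unfolding is_eigenvalue_A_def in_H_def z_def by blast
  have Re_z: "Re z = 0" and Re_z_nonneg: "0 \<le> Re z"
    by (simp_all add: z_def)
  have ode_u: "AE x in lborel. x \<in> {-L<..<0} \<longrightarrow> of_real k1 * uxx x = reduced_coeff \<rho>1 \<alpha> \<eta> z * u x"
    by (rule eigen_row_imp_reduced_ode[OF _ assms(8) Re_z_nonneg strips(1) Uu row_u mem_u])
       (use assms(1) in simp)
  have ode_v: "AE x in lborel. x \<in> {0<..<L} \<longrightarrow> of_real k2 * vxx x = reduced_coeff \<rho>2 \<alpha> \<eta> z * v x"
    by (rule eigen_row_imp_reduced_ode[OF _ assms(8) Re_z_nonneg strips(2) Vv row_v mem_v])
       (use assms(2) in simp)
  have "-L < 0" "0 < L"
    using assms(5) by simp_all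
  moreover have bc: "u (-L) = 0" "v L = 0" "u 0 = v 0"
    using H10 unfolding H10_def by blast+
  ultimately have u0: "\<forall>x\<in>{-L..0}. u x = 0" and v0: "\<forall>x\<in>{0..L}. v x = 0"
    using transmission_problem_trivial[OF _ _ assms(3,4) derivs ode_u ode_v bc transmission
        reduced_coeff_sign[OF assms(6-8) Re_z]] by blast+
  have U0: "\<And>x. x \<in> {-L<..<0} \<Longrightarrow> U x = 0" and V0: "\<And>x. x \<in> {0<..<L} \<Longrightarrow> V x = 0"
    using Uu u0 Vv v0 by auto
  have "is_zero_H L u v U V \<phi>1 \<phi>2"
    unfolding is_zero_H_def
    using u0 v0 U0 V0 memory_vanishes[OF assms(8) Re_z_nonneg U0 mem_u]
      memory_vanishes[OF assms(8) Re_z_nonneg V0 mem_v]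
    by simp
  with nonzero show False ..
qed

end
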